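(* Let $a$ be an automatic sequence and $\alpha$ a letter such that the logarithmic density $\lim_{N\to\infty}\frac1{\log N}\sum_{n\le N}\frac1n\mathbf 1_{[a(n)=\alpha]}$ equals $0$. Then the density $\lim_{N\to\infty}\frac1N\sum_{n\le N}\mathbf 1_{[a(n)=\alpha]}$ exists and equals $0$.
   Context: A sequence $a$ on a finite alphabet is automatic if for some $k\ge2$ there is a finite set of states $Q$, a transition map $\delta:Q\times\{0,\dots,k-1\}\to Q$ extended to words letter by letter, an initial state $q_0$ and an output map $\tau$ with $a(n)=\tau(\delta(q_0,(n)_k))$, $(n)_k$ being the base-$k$ expansion of $n$ (most significant digit first). *)

theory Defs
  imports "HOL-Analysis.Analysis"
begin

fun base_digits :: "nat \<Rightarrow> nat \<Rightarrow> nat list" where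
  "base_digits k n = (if k < 2 \<or> n = 0 then [] else base_digits k (n div k) @ [n mod k])"

declare base_digits.simps [simp del]

text \<open>A sequence is automatic: there is k \<ge> 2 and a finite automaton with output
 (states drawn from a finite set Q of naturals, which is no loss of generality)
 reading the base-k expansion of n, most significant digit first.\<close>
definition automatic :: "(nat \<Rightarrow> 'b) \<Rightarrow> bool" where
  "automatic a \<longleftrightarrow> (\<exists>(k::nat) (Q::nat set) (\<delta>::nat \<Rightarrow> nat \<Rightarrow> nat) q0 (\<tau>::nat \<Rightarrow> 'b).
      k \<ge> 2 \<and> finite Q \<and> q0 \<in> Q \<and>
      (\<forall>q\<in>Q. \<forall>d<k. \<delta> q d \<in> Q) \<and>
      (\<forall>n. a n = \<tau> (foldl \<delta> q0 (base_digits k n))))"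

end

theory Submission
  imports Defs
begin

text \<open>Call a state \<^emph>\<open>avoiding\<close> if no word read from it leads to an \<open>\<alpha>\<close>-state.
  If from every state reached by some \<open>m \<ge> 1\<close> an avoiding state can be reached, then
  finiteness gives one length \<open>D\<close> that works for all \<open>m\<close>; with \<open>K = k ^ D\<close>, a non-avoiding
  \<open>n = m K + v \<ge> K\<close> needs \<open>m\<close> non-avoiding and \<open>v\<close> different from the escape word of \<open>m\<close>,
  so the number \<open>L(N)\<close> of non-avoiding \<open>n \<le> N\<close> satisfies \<open>L(N) \<le> K + (K - 1) L(N div K)\<close>
  and has density zero; the \<open>\<alpha>\<close>-positions are among them.
  Otherwise some \<open>m \<ge> 1\<close> has only non-avoiding extensions, and each of them reaches \<open>\<alpha>\<close>
  within a bounded number \<open>D\<close> of further digits. Extending the \<open>k ^ L\<close> numbers with prefix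
  \<open>m\<close> and \<open>L\<close> more digits then yields \<open>k ^ L\<close> distinct \<open>\<alpha>\<close>-positions below
  \<open>(m + 1) k ^ (L + D)\<close> in \<open>[m k ^ L, m k ^ (L + D + 1))\<close>, so every such block contributes at
  least \<open>1 / ((m + 1) k ^ D)\<close> to the sum of \<open>1 / n\<close> over \<open>\<alpha>\<close>-positions, and the logarithmic
  density is bounded away from zero.\<close>

lemma base_digits_less: "d \<in> set (base_digits k n) \<Longrightarrow> d < k"
proof (induction k n rule: base_digits.induct)
  case (1 k n)
  then show ?case
    by (subst (asm) base_digits.simps) (auto split: if_splits)
qed

lemma base_digits_append_digit:
  assumes "k \<ge> 2" "n \<ge> 1" "d < k"
  shows "base_digits k (n * k + d) = base_digits k n @ [d]"
  using assms by (subst base_digits.simps) auto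

lemma mult_power_add_less:
  fixes v w :: nat
  assumes "v < k ^ l" "w < k ^ m"
  shows "v * k ^ m + w < k ^ (l + m)"
proof -
  have "v * k ^ m + w < (v + 1) * k ^ m" using assms(2) by simp
  also have "\<dots> \<le> k ^ l * k ^ m" using assms(1) by (intro mult_right_mono) auto
  finally show ?thesis by (simp add: power_add)
qed

lemma Suc_mult_power_le_mult_power_Suc:
  fixes m k :: nat
  assumes "m \<ge> 1" "k \<ge> 2"
  shows "(m + 1) * k ^ j \<le> m * k ^ Suc j"
proof -
  have "m + 1 \<le> m * k" using assms mult_le_mono2[of 2 k m] by linarith
  then have "(m + 1) * k ^ j \<le> (m * k) * k ^ j" by (rule mult_right_mono) simp
  then show ?thesis by (simp add: algebra_simps)
qed

lemma mult_power_interval_unique: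
  fixes m k n :: nat
  assumes "k > 0"
    and "m * k ^ i \<le> n" "n < m * k ^ Suc i"
    and "m * k ^ j \<le> n" "n < m * k ^ Suc j"
  shows "i = j"
proof -
  have mono: "m * k ^ Suc i' \<le> m * k ^ j'" if "Suc i' \<le> j'" for i' j'
    by (intro mult_left_mono power_increasing) (use assms(1) that in auto)
  show ?thesis
  proof (rule ccontr)
    assume "i \<noteq> j"
    then consider "Suc i \<le> j" | "Suc j \<le> i" by linarith
    then show False
      by cases (use mono[of i j] mono[of j i] assms(2-5) in linarith)+
  qed
qed

lemma finite_uniform_threshold:
  fixes P :: "'a \<Rightarrow> nat \<Rightarrow> bool"
  assumes "finite A" "\<And>x. x \<in> A \<Longrightarrow> \<exists>n. P x n"
    and "\<And>x n n'. P x n \<Longrightarrow> n \<le> n' \<Longrightarrow> P x n'"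
  shows "\<exists>N. \<forall>x\<in>A. P x N"
proof -
  have "\<forall>x\<in>A. eventually (P x) sequentially"
    using assms(2,3) by (meson eventually_sequentiallyI)
  then have "eventually (\<lambda>N. \<forall>x\<in>A. P x N) sequentially"
    using eventually_ball_finite[OF assms(1), of "\<lambda>N x. P x N"] by simp
  then show ?thesis by (auto simp: eventually_sequentially)
qed

lemma recurrence_iterate_bound:
  fixes L :: "nat \<Rightarrow> nat"
  assumes "K \<ge> 1" "\<And>N. L N \<le> N" "\<And>N. L N \<le> K + (K - 1) * L (N div K)"
  shows "L N \<le> t * K ^ t + (K - 1) ^ t * (N div K ^ t)"
proof (induction t arbitrary: N)
  case 0
  then show ?case using assms(2) by simp
next
  case (Suc t)
  have "L N \<le> K + (K - 1) * L (N div K)" by (rule assms(3))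
  also have "\<dots> \<le> K + (K - 1) * (t * K ^ t + (K - 1) ^ t * (N div K div K ^ t))"
    using Suc.IH by (intro add_left_mono mult_left_mono) auto
  also have "\<dots> = K + (K - 1) * t * K ^ t + (K - 1) ^ Suc t * (N div K ^ Suc t)"
  proof -
    have "K + x * (t * K ^ t + x ^ t * y) = K + x * t * K ^ t + x ^ Suc t * y" for x y :: nat
      by (simp add: algebra_simps)
    then show ?thesis by (simp add: div_mult2_eq)
  qed
  also have "K + (K - 1) * t * K ^ t \<le> Suc t * K ^ Suc t"
    using add_le_mono[of K "K * K ^ t" "(K - 1) * t * K ^ t" "t * (K * K ^ t)"] assms(1)
    by (simp add: mult_le_mono)
  finally show ?case by simp
qed

lemma density_zero_of_recurrence:
  fixes L :: "nat \<Rightarrow> nat"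
  assumes "K \<ge> 1" "\<And>N. L N \<le> N" "\<And>N. L N \<le> K + (K - 1) * L (N div K)"
  shows "(\<lambda>N. real (L N) / real N) \<longlonglongrightarrow> 0"
proof (rule order_tendstoI)
  fix y :: real assume "y < 0"
  have "y < real (L N) / real N" for N
    using \<open>y < 0\<close> divide_nonneg_nonneg[of "real (L N)" "real N"] by linarith
  then show "eventually (\<lambda>N. y < real (L N) / real N) sequentially"
    by (simp add: always_eventually)
next
  fix \<epsilon> :: real assume "\<epsilon> > 0"
  define \<rho> where "\<rho> = real (K - 1) / real K"
  have "\<rho> < 1" using assms(1) by (simp add: \<rho>_def)
  then obtain t where t: "\<rho> ^ t < \<epsilon> / 2"
    using real_arch_pow_inv[of "\<epsilon> / 2" \<rho>] \<open>\<epsilon> > 0\<close> by auto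
  have "eventually (\<lambda>N. real (t * K ^ t) / real N < \<epsilon> / 2) sequentially"
    using lim_const_over_n[of "real (t * K ^ t)"] by (rule order_tendstoD(2)) (simp add: \<open>\<epsilon> > 0\<close>)
  then show "eventually (\<lambda>N. real (L N) / real N < \<epsilon>) sequentially"
    using eventually_gt_at_top[of 0]
  proof eventually_elim
    case (elim N)
    have "real (L N) \<le> real (t * K ^ t) + real (K - 1) ^ t * real (N div K ^ t)"
      using recurrence_iterate_bound[OF assms, of N t]
      by (metis of_nat_add of_nat_le_iff of_nat_mult of_nat_power)
    also have "\<dots> \<le> real (t * K ^ t) + real (K - 1) ^ t * (real N / real K ^ t)"
      by (intro add_left_mono mult_left_mono)
        (auto simp flip: of_nat_power intro: of_nat_div_le_of_nat)
    also have "\<dots> = real (t * K ^ t) + \<rho> ^ t * real N"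
      by (simp add: \<rho>_def power_divide)
    finally have "real (L N) / real N \<le> real (t * K ^ t) / real N + \<rho> ^ t"
      using elim by (simp add: field_simps)
    then show ?case using elim t by linarith
  qed
qed

lemma log_average_not_tendsto_zero:
  fixes f :: "nat \<Rightarrow> real" and m b :: nat
  assumes nonneg: "\<And>n. f n \<ge> 0" and "m \<ge> 1" "b \<ge> 2" "c > 0"
    and block: "\<And>T. (\<Sum>n\<in>{m * b ^ T..<m * b ^ Suc T}. f n) \<ge> c"
  shows "\<not> (\<lambda>N. (\<Sum>n\<in>{1..N}. f n) / ln (real N)) \<longlonglongrightarrow> 0"
proof
  assume lim: "(\<lambda>N. (\<Sum>n\<in>{1..N}. f n) / ln (real N)) \<longlonglongrightarrow> 0"
  define NT where "NT T = m * b ^ T" for T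
  define A where "A = ln (real m) + ln (real b)"
  have "ln (real m) \<ge> 0" "ln (real b) > 0" using assms by simp_all
  then have "A > 0" by (simp add: A_def)
  have "m \<le> NT T" "NT T \<le> NT (Suc T)" for T
    using assms by (simp_all add: NT_def)
  have partial: "(\<Sum>n\<in>{m..<NT T}. f n) \<ge> real T * c" for T
  proof (induction T)
    case 0
    show ?case by (simp add: NT_def)
  next
    case (Suc T)
    have "(\<Sum>n\<in>{m..<NT (Suc T)}. f n)
        = (\<Sum>n\<in>{m..<NT T}. f n) + (\<Sum>n\<in>{NT T..<NT (Suc T)}. f n)"
      using \<open>m \<le> NT T\<close> \<open>NT T \<le> NT (Suc T)\<close> by (simp add: sum.atLeastLessThan_concat)
    then show ?case using Suc.IH block[of T] by (simp add: NT_def algebra_simps)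
  qed
  have bound: "c / A \<le> (\<Sum>n\<in>{1..NT T}. f n) / ln (real (NT T))" if "T \<ge> 1" for T
  proof -
    have ln_NT: "ln (real (NT T)) = ln (real m) + real T * ln (real b)"
      using assms by (simp add: NT_def ln_mult ln_realpow)
    have "0 < real T * ln (real b)" using \<open>ln (real b) > 0\<close> that by simp
    then have "0 < ln (real (NT T))" using ln_NT \<open>ln (real m) \<ge> 0\<close> by linarith
    moreover have "ln (real (NT T)) \<le> real T * A"
      using ln_NT \<open>ln (real m) \<ge> 0\<close> that mult_right_mono[of 1 "real T" "ln (real m)"]
      by (simp add: A_def algebra_simps)
    moreover have "(\<Sum>n\<in>{m..<NT T}. f n) \<le> (\<Sum>n\<in>{1..NT T}. f n)"
      by (rule sum_mono2) (use nonneg assms(2) in auto)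
    ultimately have "real T * c / (real T * A) \<le> (\<Sum>n\<in>{1..NT T}. f n) / ln (real (NT T))"
      using partial[of T] \<open>c > 0\<close> \<open>A > 0\<close> that
      by (intro frac_le) (auto intro: order.trans sum_nonneg nonneg)
    then show ?thesis using that by simp
  qed
  have "strict_mono NT"
    by (rule strict_monoI_Suc) (use assms in \<open>simp add: NT_def\<close>)
  then have "(\<lambda>T. (\<Sum>n\<in>{1..NT T}. f n) / ln (real (NT T))) \<longlonglongrightarrow> 0"
    using LIMSEQ_subseq_LIMSEQ[OF lim] by (simp add: o_def)
  then have "eventually (\<lambda>T. (\<Sum>n\<in>{1..NT T}. f n) / ln (real (NT T)) < c / A) sequentially"
    by (rule order_tendstoD(2)) (use \<open>c > 0\<close> \<open>A > 0\<close> in simp)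
  then obtain T where "T \<ge> 1" "(\<Sum>n\<in>{1..NT T}. f n) / ln (real (NT T)) < c / A"
    using eventually_happens'[OF sequentially_bot eventually_conj[OF eventually_ge_at_top]] by blast
  with bound[OF \<open>T \<ge> 1\<close>] show False by linarith
qed

locale automaton =
  fixes k :: nat and Q :: "nat set" and \<delta> :: "nat \<Rightarrow> nat \<Rightarrow> nat" and q0 :: nat
  assumes base_ge_2: "k \<ge> 2" and finite_Q: "finite Q" and q0_in_Q: "q0 \<in> Q"
    and \<delta>_in_Q: "\<And>q d. q \<in> Q \<Longrightarrow> d < k \<Longrightarrow> \<delta> q d \<in> Q"
begin

definition state :: "nat \<Rightarrow> nat" where
  "state n = foldl \<delta> q0 (base_digits k n)"

text \<open>\<open>run q l v\<close> is the state reached from \<open>q\<close> on the base-\<open>k\<close> word of length \<open>l\<close>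
  (leading zeros included) whose value is \<open>v < k ^ l\<close>.\<close>
fun run :: "nat \<Rightarrow> nat \<Rightarrow> nat \<Rightarrow> nat" where
  "run q 0 v = q"
| "run q (Suc l) v = \<delta> (run q l (v div k)) (v mod k)"

definition avoids :: "nat set \<Rightarrow> nat \<Rightarrow> bool" where
  "avoids F q \<longleftrightarrow> (\<forall>l v. v < k ^ l \<longrightarrow> run q l v \<notin> F)"

lemma state_in_Q: "state n \<in> Q"
proof -
  have "foldl \<delta> q xs \<in> Q" if "q \<in> Q" "\<forall>d\<in>set xs. d < k" for q xs
    using that by (induction xs arbitrary: q) (auto intro: \<delta>_in_Q)
  then show ?thesis unfolding state_def using q0_in_Q base_digits_less by blast
qed

lemma state_append:
  assumes "n \<ge> 1" "v < k ^ l"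
  shows "state (n * k ^ l + v) = run (state n) l v"
  using assms(2)
proof (induction l arbitrary: v)
  case 0
  then show ?case by simp
next
  case (Suc l)
  have "n * k ^ Suc l + v = (n * k ^ l + v div k) * k + v mod k"
    by (simp add: algebra_simps)
  moreover have "v div k < k ^ l"
    using Suc.prems base_ge_2 by (simp add: div_less_iff_less_mult mult.commute)
  moreover have "n * k ^ l + v div k \<ge> 1"
    using assms(1) base_ge_2 by (simp add: add_increasing2)
  ultimately show ?case
    using Suc.IH base_ge_2 by (simp add: state_def base_digits_append_digit)
qed

lemma run_append:
  assumes "w < k ^ m"
  shows "run q (l + m) (v * k ^ m + w) = run (run q l v) m w"
  using assms
proof (induction m arbitrary: w)
  case 0
  then show ?case by simp
next
  case (Suc m)
  have split: "v * k ^ Suc m + w = w + (v * k ^ m) * k" by (simp add: algebra_simps)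
  have "(v * k ^ Suc m + w) div k = v * k ^ m + w div k"
    and "(v * k ^ Suc m + w) mod k = w mod k"
    using base_ge_2 unfolding split by simp_all
  moreover have "w div k < k ^ m"
    using Suc.prems base_ge_2 by (simp add: div_less_iff_less_mult mult.commute)
  ultimately show ?case using Suc.IH by simp
qed

lemma avoids_run: "avoids F q \<Longrightarrow> v < k ^ l \<Longrightarrow> avoids F (run q l v)"
  unfolding avoids_def by (metis mult_power_add_less run_append)

lemma avoids_not_in: "avoids F q \<Longrightarrow> q \<notin> F"
  unfolding avoids_def by (metis run.simps(1) power_0 less_one)

lemma avoids_run_padded:
  assumes "avoids F (run q l v)" "v < k ^ l" "l \<le> l'"
  shows "\<exists>v'<k ^ l'. avoids F (run q l' v')"
proof -
  define m where "m = l' - l"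
  have "0 < k ^ m" using base_ge_2 by simp
  have "v * k ^ m + 0 < k ^ (l + m)"
    using mult_power_add_less[OF assms(2) \<open>0 < k ^ m\<close>] .
  moreover have "avoids F (run q (l + m) (v * k ^ m + 0))"
    unfolding run_append[OF \<open>0 < k ^ m\<close>] using avoids_run[OF assms(1) \<open>0 < k ^ m\<close>] .
  ultimately show ?thesis using assms(3) unfolding m_def by auto
qed

lemma live_count_recurrence:
  assumes escape: "\<And>m. m \<ge> 1 \<Longrightarrow> g m < k ^ D \<and> avoids F (run (state m) D (g m))"
  defines "live \<equiv> \<lambda>N. {n \<in> {1..N}. \<not> avoids F (state n)}"
  shows "card (live N) \<le> k ^ D + (k ^ D - 1) * card (live (N div k ^ D))"
proof -
  define K where "K = k ^ D"
  have "K \<ge> 1" using base_ge_2 by (simp add: K_def)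
  define S where "S = (SIGMA m:live (N div K). {..<K} - {g m})"
  let ?high = "{n \<in> live N. K \<le> n}"
  have image: "(\<lambda>n. (n div K, n mod K)) ` ?high \<subseteq> S"
  proof clarify
    fix n assume n: "n \<in> live N" "K \<le> n"
    define m where "m = n div K"
    have "m \<ge> 1" using n(2) \<open>K \<ge> 1\<close> by (simp add: m_def div_greater_zero_iff Suc_le_eq)
    moreover have "m \<le> N div K" using n(1) by (auto simp: live_def m_def div_le_mono)
    moreover have "n mod K < K" using \<open>K \<ge> 1\<close> by simp
    moreover have state_n: "state n = run (state m) D (n mod K)"
      using state_append[OF \<open>m \<ge> 1\<close>, of "n mod K" D] \<open>n mod K < K\<close>
      by (metis K_def m_def div_mult_mod_eq)
    moreover have "\<not> avoids F (state m)"
      using avoids_run[of F "state m" "n mod K" D] state_n \<open>n mod K < K\<close> n(1)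
      by (auto simp: live_def K_def)
    moreover have "n mod K \<noteq> g m"
      using escape[OF \<open>m \<ge> 1\<close>] state_n n(1) by (auto simp: live_def)
    ultimately show "(n div K, n mod K) \<in> S" by (auto simp: S_def live_def m_def)
  qed
  have inj: "inj_on (\<lambda>n. (n div K, n mod K)) ?high"
  proof (rule inj_onI)
    fix x y assume "(x div K, x mod K) = (y div K, y mod K)"
    then show "x = y" by (metis div_mult_mod_eq prod.inject)
  qed
  have "finite S" by (simp add: S_def live_def)
  then have "card ?high \<le> card S" by (rule card_inj_on_le[OF inj image])
  also have "card S = (\<Sum>m\<in>live (N div K). card ({..<K} - {g m}))"
    by (simp add: S_def live_def card_SigmaI)
  also have "\<dots> = (K - 1) * card (live (N div K))"
    using escape by (simp add: live_def K_def card_Diff_singleton)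
  finally have high: "card ?high \<le> (K - 1) * card (live (N div K))" .
  have "card {n \<in> live N. n < K} \<le> card {1..<K}"
    by (rule card_mono) (auto simp: live_def)
  then have low: "card {n \<in> live N. n < K} \<le> K" by simp
  have "live N = {n \<in> live N. n < K} \<union> ?high" by auto
  then have "card (live N) \<le> card {n \<in> live N. n < K} + card ?high"
    by (metis card_Un_le)
  with low high show ?thesis by (simp add: K_def)
qed

lemma avoiding_extension_uniform_length:
  assumes "\<forall>m\<ge>1. \<exists>l v. v < k ^ l \<and> avoids F (run (state m) l v)"
  obtains D g where "\<And>m. m \<ge> 1 \<Longrightarrow> g m < k ^ D \<and> avoids F (run (state m) D (g m))"
proof -
  have "finite (state ` {1..})" using finite_subset[OF _ finite_Q] state_in_Q by blast
  moreover have "\<exists>l. \<exists>v<k ^ l. avoids F (run q l v)" if "q \<in> state ` {1..}" for q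
    using that assms by blast
  ultimately obtain D where "\<forall>q\<in>state ` {1..}. \<exists>v<k ^ D. avoids F (run q D v)"
    using finite_uniform_threshold[of "state ` {1..}" "\<lambda>q l. \<exists>v<k ^ l. avoids F (run q l v)"]
      avoids_run_padded by blast
  then have "\<forall>m. \<exists>v. m \<ge> 1 \<longrightarrow> v < k ^ D \<and> avoids F (run (state m) D v)" by auto
  then show ?thesis using that by metis
qed

lemma density_zero_if_avoidable:
  assumes "\<forall>m\<ge>1. \<exists>l v. v < k ^ l \<and> avoids F (run (state m) l v)"
  shows "(\<lambda>N. real (card {n \<in> {1..N}. state n \<in> F}) / real N) \<longlonglongrightarrow> 0"
proof -
  obtain D g where escape: "\<And>m. m \<ge> 1 \<Longrightarrow> g m < k ^ D \<and> avoids F (run (state m) D (g m))"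
    using avoiding_extension_uniform_length[OF assms] by blast
  define L where "L N = card {n \<in> {1..N}. \<not> avoids F (state n)}" for N
  have L_density: "(\<lambda>N. real (L N) / real N) \<longlonglongrightarrow> 0"
  proof (rule density_zero_of_recurrence)
    show "1 \<le> k ^ D" using base_ge_2 by simp
    show "L N \<le> N" for N
    proof -
      have "L N \<le> card {1..N}" unfolding L_def by (rule card_mono) auto
      then show ?thesis by simp
    qed
    show "L N \<le> k ^ D + (k ^ D - 1) * L (N div k ^ D)" for N
      unfolding L_def by (rule live_count_recurrence[OF escape])
  qed
  have "card {n \<in> {1..N}. state n \<in> F} \<le> L N" for N
    unfolding L_def by (rule card_mono) (auto dest: avoids_not_in)
  then have upper: "eventually (\<lambda>N. real (card {n \<in> {1..N}. state n \<in> F}) / real N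
      \<le> real (L N) / real N) sequentially"
    by (auto intro!: always_eventually divide_right_mono)
  have "eventually (\<lambda>N. 0 \<le> real (card {n \<in> {1..N}. state n \<in> F}) / real N) sequentially"
    by (intro always_eventually allI divide_nonneg_nonneg) simp_all
  then show ?thesis using upper by (rule tendsto_sandwich[OF _ _ tendsto_const L_density])
qed

lemma hit_within_uniform_length:
  obtains D where "\<And>q. q \<in> Q \<Longrightarrow> \<not> avoids F q \<Longrightarrow> \<exists>l\<le>D. \<exists>v<k ^ l. run q l v \<in> F"
proof -
  have "\<exists>D. \<forall>q\<in>{q \<in> Q. \<not> avoids F q}. \<exists>l\<le>D. \<exists>v<k ^ l. run q l v \<in> F"
  proof (rule finite_uniform_threshold)
    show "finite {q \<in> Q. \<not> avoids F q}" using finite_Q by simp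
    show "\<exists>D. \<exists>l\<le>D. \<exists>v<k ^ l. run q l v \<in> F" if "q \<in> {q \<in> Q. \<not> avoids F q}" for q
      using that unfolding avoids_def by blast
    show "\<exists>l\<le>D'. \<exists>v<k ^ l. run q l v \<in> F" if "\<exists>l\<le>D. \<exists>v<k ^ l. run q l v \<in> F" "D \<le> D'"
      for q D D'
      using that le_trans by blast
  qed
  then show ?thesis using that by blast
qed

lemma hits_after_live_prefix:
  assumes "m \<ge> 1" and live: "\<And>l v. v < k ^ l \<Longrightarrow> \<not> avoids F (run (state m) l v)"
    and hit: "\<And>q. q \<in> Q \<Longrightarrow> \<not> avoids F q \<Longrightarrow> \<exists>l\<le>D. \<exists>v<k ^ l. run q l v \<in> F"
  obtains H where "H \<subseteq> {n. state n \<in> F}" "H \<subseteq> {m * k ^ L..<(m + 1) * k ^ (L + D)}"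
    "card H = k ^ L"
proof -
  have "\<exists>l w. l \<le> D \<and> w < k ^ l \<and> state ((m * k ^ L + u) * k ^ l + w) \<in> F"
    if u: "u < k ^ L" for u
  proof -
    have prefix: "state (m * k ^ L + u) = run (state m) L u"
      using state_append[OF \<open>m \<ge> 1\<close> u] .
    have "m * k ^ L + u \<ge> 1" using \<open>m \<ge> 1\<close> base_ge_2 by (simp add: Suc_le_eq)
    have "\<not> avoids F (state (m * k ^ L + u))" using live[OF u] prefix by simp
    then obtain l w where "l \<le> D" "w < k ^ l" "run (state (m * k ^ L + u)) l w \<in> F"
      using hit[OF state_in_Q] by blast
    moreover have "state ((m * k ^ L + u) * k ^ l + w) = run (state (m * k ^ L + u)) l w"
      using state_append[OF \<open>m * k ^ L + u \<ge> 1\<close> \<open>w < k ^ l\<close>] .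
    ultimately show ?thesis by (intro exI[of _ l] exI[of _ w]) simp
  qed
  then obtain l w where lw: "\<And>u. u < k ^ L \<Longrightarrow>
      l u \<le> D \<and> w u < k ^ l u \<and> state ((m * k ^ L + u) * k ^ l u + w u) \<in> F"
    by metis
  define \<phi> where "\<phi> u = (m * k ^ L + u) * k ^ l u + w u" for u
  have lower: "m * k ^ (L + l u) \<le> \<phi> u" for u
  proof -
    have "m * k ^ (L + l u) \<le> (m * k ^ L + u) * k ^ l u"
      by (simp add: power_add algebra_simps)
    then show ?thesis by (simp add: \<phi>_def)
  qed
  have upper: "\<phi> u < (m + 1) * k ^ (L + l u)" if "u < k ^ L" for u
  proof -
    have "\<phi> u < (m * k ^ L + u + 1) * k ^ l u" using lw[OF that] by (simp add: \<phi>_def)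
    also have "\<dots> \<le> (m + 1) * k ^ L * k ^ l u"
      using that by (intro mult_right_mono) (auto simp: algebra_simps)
    finally show ?thesis by (simp add: power_add algebra_simps)
  qed
  have upper': "\<phi> u < m * k ^ Suc (L + l u)" if "u < k ^ L" for u
    using upper[OF that] Suc_mult_power_le_mult_power_Suc[OF \<open>m \<ge> 1\<close> base_ge_2]
    by (rule less_le_trans)
  \<comment> \<open>The length \<open>L + l u\<close> is determined by the size of \<open>\<phi> u\<close>, and then \<open>u\<close> by its leading digits.\<close>
  have inj: "inj_on \<phi> {..<k ^ L}"
  proof (rule inj_onI)
    fix u u' assume "u \<in> {..<k ^ L}" "u' \<in> {..<k ^ L}" and eq: "\<phi> u = \<phi> u'"
    then have u: "u < k ^ L" and u': "u' < k ^ L" by auto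
    have "0 < k" using base_ge_2 by simp
    have "L + l u = L + l u'"
      by (rule mult_power_interval_unique[OF \<open>0 < k\<close> lower upper'[OF u]
            lower[of u', folded eq] upper'[OF u', folded eq]])
    then have "l u = l u'" by simp
    have div_eq: "(x * b + r) div b = x" if "r < b" for x b r :: nat
      using that by simp
    have "m * k ^ L + u = \<phi> u div k ^ l u"
      unfolding \<phi>_def using lw[OF u] by (simp only: div_eq)
    also have "\<dots> = \<phi> u' div k ^ l u'" using eq \<open>l u = l u'\<close> by simp
    also have "\<dots> = m * k ^ L + u'"
      unfolding \<phi>_def using lw[OF u'] by (simp only: div_eq)
    finally show "u = u'" by simp
  qed
  show ?thesis
  proof (rule that[of "\<phi> ` {..<k ^ L}"])
    show "\<phi> ` {..<k ^ L} \<subseteq> {n. state n \<in> F}" using lw by (auto simp: \<phi>_def)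
    show "\<phi> ` {..<k ^ L} \<subseteq> {m * k ^ L..<(m + 1) * k ^ (L + D)}"
    proof clarify
      fix u assume "u < k ^ L"
      have "m * k ^ L \<le> m * k ^ (L + l u)"
        by (intro mult_left_mono power_increasing) (use base_ge_2 in auto)
      also have "\<dots> \<le> \<phi> u" by (rule lower)
      finally have "m * k ^ L \<le> \<phi> u" .
      have "\<phi> u < (m + 1) * k ^ (L + l u)" using upper[OF \<open>u < k ^ L\<close>] .
      also have "\<dots> \<le> (m + 1) * k ^ (L + D)"
        by (intro mult_left_mono power_increasing) (use base_ge_2 lw[OF \<open>u < k ^ L\<close>] in auto)
      finally show "\<phi> u \<in> {m * k ^ L..<(m + 1) * k ^ (L + D)}"
        using \<open>m * k ^ L \<le> \<phi> u\<close> by simp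
    qed
    show "card (\<phi> ` {..<k ^ L}) = k ^ L" using card_image[OF inj] by simp
  qed
qed

lemma block_sum_lower_bound:
  assumes "m \<ge> 1" and "\<And>l v. v < k ^ l \<Longrightarrow> \<not> avoids F (run (state m) l v)"
    and "\<And>q. q \<in> Q \<Longrightarrow> \<not> avoids F q \<Longrightarrow> \<exists>l\<le>D. \<exists>v<k ^ l. run q l v \<in> F"
  shows "(\<Sum>n\<in>{m * k ^ L..<m * k ^ (L + Suc D)}. if state n \<in> F then 1 / real n else 0)
    \<ge> 1 / (real (m + 1) * real k ^ D)"
proof -
  obtain H where H: "H \<subseteq> {n. state n \<in> F}" "H \<subseteq> {m * k ^ L..<(m + 1) * k ^ (L + D)}"
    "card H = k ^ L"
    using hits_after_live_prefix[OF assms] .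
  define M where "M = (m + 1) * k ^ (L + D)"
  have "M \<le> m * k ^ (L + Suc D)"
    using Suc_mult_power_le_mult_power_Suc[OF assms(1) base_ge_2] by (simp add: M_def)
  have "0 < m * k ^ L" using assms(1) base_ge_2 by simp
  have M_eq: "real M = real (m + 1) * real k ^ D * real k ^ L"
    by (simp add: M_def power_add algebra_simps)
  have "1 / (real (m + 1) * real k ^ D) = real k ^ L / real M"
    unfolding M_eq by (rule nonzero_divide_mult_cancel_right[symmetric]) (use base_ge_2 in simp)
  also have "\<dots> = (\<Sum>n\<in>H. 1 / real M)" using H(3) by simp
  also have "\<dots> \<le> (\<Sum>n\<in>H. if state n \<in> F then 1 / real n else 0)"
  proof (rule sum_mono)
    fix n assume "n \<in> H"
    then have "state n \<in> F" "m * k ^ L \<le> n" "n < M" using H by (auto simp: M_def)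
    moreover from this(2) have "0 < n" using \<open>0 < m * k ^ L\<close> by linarith
    ultimately show "1 / real M \<le> (if state n \<in> F then 1 / real n else 0)"
      by (simp add: frac_le)
  qed
  also have "\<dots> \<le> (\<Sum>n\<in>{m * k ^ L..<m * k ^ (L + Suc D)}. if state n \<in> F then 1 / real n else 0)"
    by (rule sum_mono2) (use H \<open>M \<le> m * k ^ (L + Suc D)\<close> in \<open>auto simp: M_def\<close>)
  finally show ?thesis .
qed

lemma log_density_nonzero_if_unavoidable:
  assumes "m \<ge> 1" "\<And>l v. v < k ^ l \<Longrightarrow> \<not> avoids F (run (state m) l v)"
  shows "\<not> (\<lambda>N. (\<Sum>n\<in>{1..N}. if state n \<in> F then 1 / real n else 0) / ln (real N))
    \<longlonglongrightarrow> 0"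
proof -
  obtain D where hit: "\<And>q. q \<in> Q \<Longrightarrow> \<not> avoids F q \<Longrightarrow> \<exists>l\<le>D. \<exists>v<k ^ l. run q l v \<in> F"
    using hit_within_uniform_length by blast
  have block: "(\<Sum>n\<in>{m * k ^ L..<m * k ^ (L + Suc D)}. if state n \<in> F then 1 / real n else 0)
    \<ge> 1 / (real (m + 1) * real k ^ D)" for L
    by (rule block_sum_lower_bound[OF assms hit])
  have "k ^ Suc D \<ge> 2" using base_ge_2 mult_le_mono[of 2 k 1 "k ^ D"] by simp
  show ?thesis
  proof (rule log_average_not_tendsto_zero)
    show "(\<Sum>n\<in>{m * (k ^ Suc D) ^ T..<m * (k ^ Suc D) ^ Suc T}.
            if state n \<in> F then 1 / real n else 0) \<ge> 1 / (real (m + 1) * real k ^ D)" for T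
    proof -
      have "(k ^ Suc D) ^ T = k ^ (T * Suc D)" by (metis power_mult mult.commute)
      moreover from this have "(k ^ Suc D) ^ Suc T = k ^ (T * Suc D + Suc D)"
        by (simp only: power_Suc2[of "k ^ Suc D" T] power_add[of k "T * Suc D" "Suc D"])
      ultimately show ?thesis using block[of "T * Suc D"] by (simp only:)
    qed
  qed (use assms(1) base_ge_2 \<open>k ^ Suc D \<ge> 2\<close> in auto)
qed

end

theorem lemma3p6:
  fixes a :: "nat \<Rightarrow> 'b" and \<alpha> :: 'b
  assumes "automatic a"
    and "(\<lambda>N. (\<Sum>n\<in>{1..N}. (if a n = \<alpha> then 1 / real n else 0)) / ln (real N))
           \<longlonglongrightarrow> 0"
  shows "(\<lambda>N. real (card {n\<in>{1..N}. a n = \<alpha>}) / real N) \<longlonglongrightarrow> 0"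
proof -
  from assms(1) obtain k Q \<delta> q0 and \<tau> :: "nat \<Rightarrow> 'b"
    where aut: "automaton k Q \<delta> q0" and a: "\<And>n. a n = \<tau> (foldl \<delta> q0 (base_digits k n))"
    unfolding automatic_def automaton_def by blast
  interpret automaton k Q \<delta> q0 by (fact aut)
  define F where "F = {q. \<tau> q = \<alpha>}"
  have a_eq_\<alpha>: "a n = \<alpha> \<longleftrightarrow> state n \<in> F" for n by (simp add: a F_def state_def)
  show ?thesis
  proof (cases "\<exists>m\<ge>1. \<forall>l v. v < k ^ l \<longrightarrow> \<not> avoids F (run (state m) l v)")
    case True
    then obtain m where "m \<ge> 1" "\<And>l v. v < k ^ l \<Longrightarrow> \<not> avoids F (run (state m) l v)"
      by blast
    from log_density_nonzero_if_unavoidable[OF this] assms(2) show ?thesis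
      by (simp add: a_eq_\<alpha>)
  next
    case False
    then have "\<forall>m\<ge>1. \<exists>l v. v < k ^ l \<and> avoids F (run (state m) l v)" by blast
    from density_zero_if_avoidable[OF this] show ?thesis by (simp add: a_eq_\<alpha>)
  qed
qed

end
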